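(* Let $f,g:[0,+\infty)\to[0,+\infty)$ be increasing functions with $\lim_{x\to+\infty}f(x)=\lim_{x\to+\infty}g(x)=+\infty$. Then there exist $\delta>0$ and a continuous increasing concave function $v:[0,+\infty)\to[0,+\infty)$ with $\lim_{x\to+\infty}v(x)=+\infty$ such that $\frac{v(f(x))}{v(g(x))}\ge\delta$ for every sufficiently large $x$. *)

theory Defs
  imports "HOL-Analysis.Analysis"
begin

end

theory Submission
  imports Defs
begin

text \<open>
  Choose \<open>b\<^sub>0 = 1\<close> and \<open>b\<^sub>k\<^sub>+\<^sub>1\<close> at least \<open>2 b\<^sub>k\<close> and at least \<open>sup {g x. f x \<le> b\<^sub>k}\<close>, and put
  \<open>v t = (\<Sum>k. min (t / b\<^sub>k) 1)\<close>. Every summand is concave, increasing and continuous,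
  and since the \<open>b\<^sub>k\<close> grow geometrically, \<open>v\<close> differs from the counting function
  \<open>#{k. b\<^sub>k \<le> t}\<close> by at most 2. If \<open>b\<^sub>m \<le> f x < b\<^sub>m\<^sub>+\<^sub>1\<close> then \<open>g x \<le> b\<^sub>m\<^sub>+\<^sub>2\<close>, so
  \<open>v (f x) / v (g x) \<ge> (m + 1) / (m + 4) \<ge> 1/4\<close>.
\<close>

lemma concave_on_min:
  fixes f g :: "'a::real_vector \<Rightarrow> real"
  assumes f: "concave_on S f" and g: "concave_on S g"
  shows "concave_on S (\<lambda>x. min (f x) (g x))"
  unfolding concave_on_iff
proof (intro conjI ballI allI impI)
  show "convex S" using f by (rule concave_on_imp_convex)
  fix x y assume xy: "x \<in> S" "y \<in> S"
  fix u w :: real assume uw: "0 \<le> u" "0 \<le> w" "u + w = 1"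
  have "u * min (f x) (g x) + w * min (f y) (g y) \<le> u * f x + w * f y"
    using uw by (intro add_mono mult_left_mono) auto
  also have "\<dots> \<le> f (u *\<^sub>R x + w *\<^sub>R y)"
    using f xy uw by (auto simp: concave_on_iff)
  finally have "u * min (f x) (g x) + w * min (f y) (g y) \<le> f (u *\<^sub>R x + w *\<^sub>R y)" .
  moreover have "u * min (f x) (g x) + w * min (f y) (g y) \<le> u * g x + w * g y"
    using uw by (intro add_mono mult_left_mono) auto
  moreover have "\<dots> \<le> g (u *\<^sub>R x + w *\<^sub>R y)"
    using g xy uw by (auto simp: concave_on_iff)
  ultimately show "u * min (f x) (g x) + w * min (f y) (g y)
      \<le> min (f (u *\<^sub>R x + w *\<^sub>R y)) (g (u *\<^sub>R x + w *\<^sub>R y))"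
    by simp
qed

lemma concave_on_suminf:
  fixes h :: "nat \<Rightarrow> 'a::real_vector \<Rightarrow> real"
  assumes concave: "\<And>k. concave_on S (h k)"
    and summable: "\<And>x. x \<in> S \<Longrightarrow> summable (\<lambda>k. h k x)"
  shows "concave_on S (\<lambda>x. \<Sum>k. h k x)"
  unfolding concave_on_iff
proof (intro conjI ballI allI impI)
  show "convex S" using concave by (rule concave_on_imp_convex)
  fix x y assume xy: "x \<in> S" "y \<in> S"
  fix u w :: real assume uw: "0 \<le> u" "0 \<le> w" "u + w = 1"
  have z: "u *\<^sub>R x + w *\<^sub>R y \<in> S"
    using \<open>convex S\<close> xy uw by (rule convexD)
  have "u * (\<Sum>k. h k x) + w * (\<Sum>k. h k y) = (\<Sum>k. u * h k x + w * h k y)"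
    using summable xy
    by (simp add: suminf_add summable_mult flip: suminf_mult)
  also have "\<dots> \<le> (\<Sum>k. h k (u *\<^sub>R x + w *\<^sub>R y))"
    using concave xy uw summable[OF z] summable xy
    by (intro suminf_le summable_add summable_mult) (auto simp: concave_on_iff)
  finally show "u * (\<Sum>k. h k x) + w * (\<Sum>k. h k y) \<le> (\<Sum>k. h k (u *\<^sub>R x + w *\<^sub>R y))" .
qed

lemma bounded_on_sublevel_sets:
  fixes f g :: "real \<Rightarrow> real"
  assumes g_mono: "mono_on {0..} g" and f_lim: "filterlim f at_top at_top"
  obtains \<psi> where "\<And>a x. 0 \<le> x \<Longrightarrow> f x \<le> a \<Longrightarrow> g x \<le> \<psi> a"
proof -
  have "\<exists>c. \<forall>x\<ge>0. f x \<le> a \<longrightarrow> g x \<le> c" for a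
  proof -
    obtain X where X: "\<And>x. X \<le> x \<Longrightarrow> a < f x"
      using f_lim by (auto simp: filterlim_at_top_dense eventually_at_top_linorder)
    have "g x \<le> g (max X 0)" if "0 \<le> x" "f x \<le> a" for x
      using X[of x] that by (cases "X \<le> x") (auto intro!: mono_onD[OF g_mono])
    then show ?thesis by blast
  qed
  then show thesis using that by metis
qed

locale doubling_sequence =
  fixes b :: "nat \<Rightarrow> real"
  assumes b_0: "b 0 = 1" and b_Suc: "\<And>k. 2 * b k \<le> b (Suc k)"
begin

lemma power_le_b: "2 ^ k \<le> b k"
proof (induction k)
  case (Suc k)
  then show ?case using b_Suc[of k] by simp
qed (simp add: b_0)

lemma b_pos: "0 < b k"
  by (rule less_le_trans[OF _ power_le_b]) simp

lemma power_mult_le_b: "2 ^ k * b n \<le> b (k + n)"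
proof (induction k)
  case (Suc k)
  then show ?case using b_Suc[of "k + n"] by simp
qed simp

lemma b_mono: "k \<le> m \<Longrightarrow> b k \<le> b m"
proof (rule lift_Suc_mono_le[of b])
  show "b i \<le> b (Suc i)" for i
    using b_Suc[of i] b_pos[of i] by linarith
qed

lemma b_bracket:
  assumes "b 0 \<le> t"
  obtains m where "b m \<le> t" "t < b (Suc m)"
proof -
  obtain n where "t < 2 ^ n" using real_arch_pow[of 2] by auto
  then have "t < b n" using power_le_b[of n] by linarith
  then show thesis
    using ex_least_nat_less[of "\<lambda>k. t < b k" n] assms that by (auto simp: not_less)
qed

definition smooth_count :: "real \<Rightarrow> real" where
  "smooth_count t = (\<Sum>k. min (t / b k) 1)"

lemma summable_smooth_count: "summable (\<lambda>k. min (t / b k) 1)"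
proof (rule summable_comparison_test)
  have "\<bar>min (t / b k) 1\<bar> \<le> \<bar>t\<bar> / b k" for k
    using b_pos[of k] by (auto simp: abs_if divide_le_eq min_def)
  also have "\<bar>t\<bar> / b k \<le> \<bar>t\<bar> * (1/2) ^ k" for k
    using power_le_b[of k] b_pos[of k]
    by (auto simp: power_divide intro!: divide_left_mono)
  finally show "\<exists>N. \<forall>k\<ge>N. norm (min (t / b k) 1) \<le> \<bar>t\<bar> * (1/2) ^ k"
    by auto
  show "summable (\<lambda>k. \<bar>t\<bar> * (1/2::real) ^ k)"
    by (intro summable_mult summable_geometric) auto
qed

lemma concave_smooth_count: "concave_on UNIV smooth_count"
  unfolding smooth_count_def
proof (intro concave_on_suminf concave_on_min summable_smooth_count)
  show "concave_on UNIV (\<lambda>t. t / b k)" for k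
    using b_pos[of k] by (intro concave_on_cdiv) (auto simp: concave_on_ident)
qed (simp add: concave_on_const)

lemma continuous_smooth_count: "continuous_on UNIV smooth_count"
  using convex_on_continuous[OF open_UNIV, of "\<lambda>t. - smooth_count t"]
    concave_smooth_count continuous_on_minus[of UNIV "\<lambda>t. - smooth_count t"]
  by (simp add: concave_on_def)

lemma smooth_count_mono: "s \<le> t \<Longrightarrow> smooth_count s \<le> smooth_count t"
  unfolding smooth_count_def using b_pos
  by (intro suminf_le summable_smooth_count min.mono divide_right_mono)
    (auto intro: less_imp_le)

lemma smooth_count_nonneg: "0 \<le> t \<Longrightarrow> 0 \<le> smooth_count t"
  unfolding smooth_count_def using b_pos
  by (intro suminf_nonneg summable_smooth_count) (auto intro: less_imp_le divide_nonneg_pos)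

lemma smooth_count_ge:
  assumes "b m \<le> t"
  shows "real m + 1 \<le> smooth_count t"
proof -
  have t: "0 \<le> t" using assms b_pos[of m] by linarith
  have "(\<Sum>k<Suc m. min (t / b k) 1) = (\<Sum>k<Suc m. 1)"
  proof (rule sum.cong)
    fix k assume "k \<in> {..<Suc m}"
    then have "b k \<le> t" using b_mono[of k m] assms by auto
    then show "min (t / b k) 1 = 1" using b_pos[of k] by (simp add: min_def le_divide_eq)
  qed simp
  moreover have "0 \<le> (\<Sum>k. min (t / b (k + Suc m)) 1)"
    using b_pos t summable_ignore_initial_segment[OF summable_smooth_count, of t "Suc m"]
    by (intro suminf_nonneg) (auto intro: less_imp_le divide_nonneg_pos)
  ultimately show ?thesis
    unfolding smooth_count_def suminf_split_initial_segment[OF summable_smooth_count, of t "Suc m"]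
    by simp
qed

lemma smooth_count_le:
  assumes "0 \<le> t" "t \<le> b n"
  shows "smooth_count t \<le> real n + 2"
proof -
  have "(\<Sum>k<n. min (t / b k) 1) \<le> (\<Sum>k<n. 1)"
    by (intro sum_mono) simp
  moreover have "(\<Sum>k. min (t / b (k + n)) 1) \<le> (\<Sum>k. (1/2::real) ^ k)"
  proof (intro suminf_le summable_ignore_initial_segment summable_smooth_count)
    fix k
    have "min (t / b (k + n)) 1 \<le> b n / (2 ^ k * b n)"
      using assms power_mult_le_b[of k n] b_pos[of n]
      by (intro min.coboundedI1 frac_le) auto
    also have "\<dots> = (1/2) ^ k" using b_pos[of n] by (simp add: power_divide)
    finally show "min (t / b (k + n)) 1 \<le> (1/2) ^ k" .
  qed simp
  moreover have "(\<Sum>k. (1/2::real) ^ k) = 2" by (simp add: suminf_geometric)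
  ultimately show ?thesis
    unfolding smooth_count_def suminf_split_initial_segment[OF summable_smooth_count, of t n]
    by simp
qed

lemma filterlim_smooth_count: "filterlim smooth_count at_top at_top"
  unfolding filterlim_at_top eventually_at_top_linorder
proof
  fix z :: real
  obtain m :: nat where "z \<le> m" using real_arch_simple by blast
  then show "\<exists>t0. \<forall>t\<ge>t0. z \<le> smooth_count t"
    using smooth_count_ge[of m] by (intro exI[of _ "b m"]) force
qed

lemma smooth_count_ratio_ge:
  assumes "b m \<le> s" "b 0 \<le> t" "t \<le> b (Suc (Suc m))"
  shows "1/4 \<le> smooth_count s / smooth_count t"
proof -
  have "1 \<le> smooth_count t" using smooth_count_ge[of 0 t] assms(2) by simp
  moreover have "smooth_count t \<le> real m + 4"
    using smooth_count_le[of t "Suc (Suc m)"] assms(2,3) b_0 by simp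
  moreover have "real m + 1 \<le> smooth_count s" using smooth_count_ge assms(1) .
  ultimately have "(real m + 1) / (real m + 4) \<le> smooth_count s / smooth_count t"
    by (intro frac_le) auto
  moreover have "1/4 \<le> (real m + 1) / (real m + 4)" by (simp add: field_simps)
  ultimately show ?thesis by linarith
qed

end

lemma doubling_sequence_above:
  fixes \<psi> :: "real \<Rightarrow> real"
  obtains b where "doubling_sequence b" "\<And>k. \<psi> (b k) \<le> b (Suc k)"
proof
  define b where "b = rec_nat 1 (\<lambda>_ c. max (2 * c) (\<psi> c))"
  show "doubling_sequence b" by unfold_locales (simp_all add: b_def)
  show "\<psi> (b k) \<le> b (Suc k)" for k by (simp add: b_def)
qed

theorem lemma3p2:
  fixes f g :: "real \<Rightarrow> real"
  assumes f_mono: "mono_on {0..} f" and f_nonneg: "\<forall>x\<ge>0. f x \<ge> 0"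
    and g_mono: "mono_on {0..} g" and g_nonneg: "\<forall>x\<ge>0. g x \<ge> 0"
    and f_lim: "filterlim f at_top at_top"
    and g_lim: "filterlim g at_top at_top"
  shows "\<exists>\<delta>>0. \<exists>v :: real \<Rightarrow> real.
           continuous_on {0..} v \<and> mono_on {0..} v \<and> concave_on {0..} v \<and>
           (\<forall>x\<ge>0. v x \<ge> 0) \<and> filterlim v at_top at_top \<and>
           (\<forall>\<^sub>F x in at_top. v (f x) / v (g x) \<ge> \<delta>)"
proof -
  obtain \<psi> where \<psi>: "\<And>a x. 0 \<le> x \<Longrightarrow> f x \<le> a \<Longrightarrow> g x \<le> \<psi> a"
    using bounded_on_sublevel_sets[OF g_mono f_lim] by blast
  obtain b where "doubling_sequence b" and b_above: "\<And>k. \<psi> (b k) \<le> b (Suc k)"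
    using doubling_sequence_above by blast
  then interpret doubling_sequence b by simp
  have "\<forall>\<^sub>F x in at_top. 1/4 \<le> smooth_count (f x) / smooth_count (g x)"
    using eventually_ge_at_top[of 0] f_lim[unfolded filterlim_at_top, rule_format, of 1]
      g_lim[unfolded filterlim_at_top, rule_format, of 1]
  proof eventually_elim
    case (elim x)
    then obtain m where m: "b m \<le> f x" "f x < b (Suc m)" using b_bracket b_0 by metis
    then have "g x \<le> b (Suc (Suc m))"
      using order_trans[OF \<psi>[of x "b (Suc m)"] b_above[of "Suc m"]] elim by simp
    then show ?case using smooth_count_ratio_ge m elim b_0 by simp
  qed
  moreover have "concave_on {0..} smooth_count"
    using concave_smooth_count unfolding concave_on_def by (rule convex_on_subset) auto
  ultimately show ?thesis
    using continuous_on_subset[OF continuous_smooth_count] filterlim_smooth_count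
    by (intro exI[of _ "1/4"] exI[of _ smooth_count])
      (auto intro!: mono_onI smooth_count_mono smooth_count_nonneg)
qed

end
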